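(* Suppose $\mathcal{G}$ acts measurably on $\mathcal{X}$ and trivially on $\mathcal{Y}$. Let $\mathcal{X}_\pi$ be a measurable cross-section of $\mathcal{X}$ with projection $\pi$. Let $\mathcal{F}$ be a hypothesis class of $\mathcal{G}$-invariant functions. Let $\mathsf{T}=(X,Y,\ell)$ be any task, write $X_\pi=\pi(X)$ and define $\mathsf{T}_\pi=(X_\pi,Y,\ell)$. Assume there exists a probability measure $\nu$ on $\mathcal{G}$ such that $X\overset{d}{=}GX_\pi$ with $G\sim\nu$ independent of $X_\pi$. Then $\mathsf{T}$ and $\mathsf{T}_\pi$ are $(\mathcal{F},\mathcal{G})$-equivalent.
   Context: $\mathcal{G}$ is a compact, second countable, Hausdorff topological group; $\mathcal{X}$ is a nonempty Polish space and $\mathcal{Y}$ a standard Borel space, both with Borel $\sigma$-algebras; $\mathcal{Z}=\mathcal{X}\times\mathcal{Y}$ with action $g(x,y)=(gx,gy)$. A task is a tuple $(X,Y,\ell)$ with $X,Y$ random elements of $\mathcal{X},\mathcal{Y}$ and $\ell:\mathcal{Y}\times\mathcal{Y}\to\mathbb{R}_+$ integrable; it is assumed that $\mathbb{E}[\ell(f(X),Y)]<\infty$ for all $f\in\mathcal{F}$. A hypothesis class $\mathcal{F}$ is a set of measurable functions $\mathcal{X}\to\mathcal{Y}$; a learning algorithm is a map $\mathtt{alg}:\bigcup_{i\in\mathbb{N}}\mathcal{Z}^i\to\mathcal{F}$. $\mathtt{alg}$ learns $\mathcal{F}$ with respect to $(X,Y,\ell)$ if there is $m:(0,1)^2\to\mathbb{N}$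 such that for all $\epsilon,\delta\in(0,1)$ and $n\ge m(\epsilon,\delta)$, $\mathbb{P}\big(\mathbb{E}[\ell(f_S(X),Y)\mid S]\le\inf_{f\in\mathcal{F}}\mathbb{E}[\ell(f(X),Y)]+\epsilon\big)\ge1-\delta$, where $S$ is a tuple of $n$ i.i.d. copies of $(X,Y)$ independent of $(X,Y)$ and $f_S=\mathtt{alg}(S)$; its sample complexity $m_{\mathtt{alg},\mathsf{T}}$ is the pointwise minimum of all such $m$. $\mathtt{alg}$ is $\mathcal{G}$-invariant if $\mathtt{alg}((g_1x_1,g_1y_1),\dots,(g_nx_n,g_ny_n))=\mathtt{alg}((x_1,y_1),\dots,(x_n,y_n))$ for all $n$, $(x_i,y_i)\in\mathcal{Z}$, $g_i\in\mathcal{G}$. Tasks $\mathsf{T},\mathsf{T}'$ are $(\mathcal{F},\mathcal{G})$-equivalent if for every $\mathcal{G}$-invariant learning algorithm $\mathtt{alg}$: $\mathtt{alg}$ learns $\mathcal{F}$ w.r.t. $\mathsf{T}$ iff it does w.r.t. $\mathsf{T}'$, and $m_{\mathtt{alg},\mathsf{T}}=m_{\mathtt{alg},\mathsf{T}'}$. A measurable cross-section is a measurable $\mathcal{X}_\pi\subseteq\mathcal{X}$ containing exactly one point of each $\mathcal{G}$-orbit, such that the map $\pi:\mathcal{X}\to\mathcal{X}_\pi$ sending $x$ to the element of $\mathcal{X}_\pi$ in its orbit is measurable (trace $\sigma$-algebra on $\mathcal{X}_\pi$). $f$ is $\mathcal{G}$-invariant if $f(gx)=f(x)$ for all $g,x$.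 *)

theory Defs
  imports "HOL-Probability.Probability"
begin

definition standard_borel_space :: "'y measure \<Rightarrow> bool" where
  "standard_borel_space MY \<longleftrightarrow>
     (\<exists>T :: 'y topology. completely_metrizable_space T \<and> separable_space T \<and>
        topspace T = space MY \<and> sets MY = sigma_sets (topspace T) {U. openin T U})"

definition compact_topological_group ::
    "('g::{t2_space,second_countable_topology} \<Rightarrow> 'g \<Rightarrow> 'g) \<Rightarrow> 'g \<Rightarrow> ('g \<Rightarrow> 'g) \<Rightarrow> bool" where
  "compact_topological_group mul e ginv \<longleftrightarrow>
     (\<forall>a b c. mul (mul a b) c = mul a (mul b c)) \<and>
     (\<forall>a. mul e a = a \<and> mul a e = a) \<and>
     (\<forall>a. mul (ginv a) a = e \<and> mul a (ginv a) = e) \<and>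
     continuous_on UNIV (\<lambda>p. mul (fst p) (snd p)) \<and>
     continuous_on UNIV ginv \<and>
     compact (UNIV :: 'g set)"

definition measurable_action ::
    "('g::topological_space \<Rightarrow> 'g \<Rightarrow> 'g) \<Rightarrow> 'g \<Rightarrow> ('g \<Rightarrow> 'x::topological_space \<Rightarrow> 'x) \<Rightarrow> bool" where
  "measurable_action mul e act \<longleftrightarrow>
     (\<forall>x. act e x = x) \<and> (\<forall>g h x. act (mul g h) x = act g (act h x)) \<and>
     (\<lambda>p. act (fst p) (snd p)) \<in> measurable (borel \<Otimes>\<^sub>M borel) borel"

definition orbit :: "('g \<Rightarrow> 'x \<Rightarrow> 'x) \<Rightarrow> 'x \<Rightarrow> 'x set" where
  "orbit act x = {act g x | g. True}"

definition measurable_cross_section ::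
    "('g \<Rightarrow> 'x::topological_space \<Rightarrow> 'x) \<Rightarrow> 'x set \<Rightarrow> ('x \<Rightarrow> 'x) \<Rightarrow> bool" where
  "measurable_cross_section act Xpi proj \<longleftrightarrow>
     Xpi \<in> sets borel \<and>
     (\<forall>x. \<exists>!p. p \<in> Xpi \<and> p \<in> orbit act x) \<and>
     (\<forall>x. proj x \<in> Xpi \<and> proj x \<in> orbit act x) \<and>
     proj \<in> measurable borel (restrict_space borel Xpi)"

definition invariant_fun :: "('g \<Rightarrow> 'x \<Rightarrow> 'x) \<Rightarrow> ('x \<Rightarrow> 'y) \<Rightarrow> bool" where
  "invariant_fun act f \<longleftrightarrow> (\<forall>g x. f (act g x) = f x)"

definition hypothesis_class :: "'y measure \<Rightarrow> ('x::topological_space \<Rightarrow> 'y) set \<Rightarrow> bool" where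
  "hypothesis_class MY F \<longleftrightarrow> F \<subseteq> measurable borel MY"

definition is_task ::
    "'y measure \<Rightarrow> ('x::topological_space \<Rightarrow> 'y) set \<Rightarrow> 'w measure \<Rightarrow> ('w \<Rightarrow> 'x) \<Rightarrow> ('w \<Rightarrow> 'y)
     \<Rightarrow> ('y \<Rightarrow> 'y \<Rightarrow> real) \<Rightarrow> bool" where
  "is_task MY F M X Y loss \<longleftrightarrow>
     prob_space M \<and> X \<in> borel_measurable M \<and> Y \<in> measurable M MY \<and>
     (\<forall>a b. 0 \<le> loss a b) \<and>
     (\<lambda>p. loss (fst p) (snd p)) \<in> borel_measurable (MY \<Otimes>\<^sub>M MY) \<and>
     (\<forall>f\<in>F. (\<integral>\<^sup>+ w. ennreal (loss (f (X w)) (Y w)) \<partial>M) < \<infinity>)"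

definition data_law :: "'y measure \<Rightarrow> 'w measure \<Rightarrow> ('w \<Rightarrow> 'x::topological_space) \<Rightarrow> ('w \<Rightarrow> 'y)
     \<Rightarrow> ('x \<times> 'y) measure" where
  "data_law MY M X Y = distr M (borel \<Otimes>\<^sub>M MY) (\<lambda>w. (X w, Y w))"

text \<open>Risk E[loss(f(X),Y)]; for f = f_S with S independent of (X,Y) this is the
  conditional expectation E[loss(f_S(X),Y) | S].\<close>
definition risk :: "'y measure \<Rightarrow> 'w measure \<Rightarrow> ('w \<Rightarrow> 'x::topological_space) \<Rightarrow> ('w \<Rightarrow> 'y)
     \<Rightarrow> ('y \<Rightarrow> 'y \<Rightarrow> real) \<Rightarrow> ('x \<Rightarrow> 'y) \<Rightarrow> ennreal" where
  "risk MY M X Y loss f = (\<integral>\<^sup>+ z. ennreal (loss (f (fst z)) (snd z)) \<partial>(data_law MY M X Y))"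

definition sample_law :: "'y measure \<Rightarrow> 'w measure \<Rightarrow> ('w \<Rightarrow> 'x::topological_space) \<Rightarrow> ('w \<Rightarrow> 'y)
     \<Rightarrow> nat \<Rightarrow> (nat \<Rightarrow> 'x \<times> 'y) measure" where
  "sample_law MY M X Y n = PiM {..<n} (\<lambda>_. data_law MY M X Y)"

definition learning_algorithm :: "('x \<Rightarrow> 'y) set \<Rightarrow> (('x \<times> 'y) list \<Rightarrow> ('x \<Rightarrow> 'y)) \<Rightarrow> bool" where
  "learning_algorithm F alg \<longleftrightarrow> (\<forall>zs. alg zs \<in> F)"

definition invariant_algorithm ::
    "('g \<Rightarrow> 'x \<Rightarrow> 'x) \<Rightarrow> (('x \<times> 'y) list \<Rightarrow> ('x \<Rightarrow> 'y)) \<Rightarrow> bool" where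
  "invariant_algorithm act alg \<longleftrightarrow>
     (\<forall>zs gs. length gs = length zs \<longrightarrow>
        alg (map2 (\<lambda>g z. (act g (fst z), snd z)) gs zs) = alg zs)"

definition learns_with ::
    "'y measure \<Rightarrow> ('x::topological_space \<Rightarrow> 'y) set \<Rightarrow> (('x \<times> 'y) list \<Rightarrow> ('x \<Rightarrow> 'y))
     \<Rightarrow> 'w measure \<Rightarrow> ('w \<Rightarrow> 'x) \<Rightarrow> ('w \<Rightarrow> 'y) \<Rightarrow> ('y \<Rightarrow> 'y \<Rightarrow> real)
     \<Rightarrow> (real \<Rightarrow> real \<Rightarrow> nat) \<Rightarrow> bool" where
  "learns_with MY F alg M X Y loss m \<longleftrightarrow>
     (\<forall>\<epsilon> \<delta>. 0 < \<epsilon> \<and> \<epsilon> < 1 \<and> 0 < \<delta> \<and> \<delta> < 1 \<longrightarrow>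
        (\<forall>n\<ge>m \<epsilon> \<delta>.
           measure (sample_law MY M X Y n)
             {s \<in> space (sample_law MY M X Y n).
                risk MY M X Y loss (alg (map s [0..<n]))
                  \<le> (\<Sqinter>f\<in>F. risk MY M X Y loss f) + ennreal \<epsilon>}
           \<ge> 1 - \<delta>))"

definition learns ::
    "'y measure \<Rightarrow> ('x::topological_space \<Rightarrow> 'y) set \<Rightarrow> (('x \<times> 'y) list \<Rightarrow> ('x \<Rightarrow> 'y))
     \<Rightarrow> 'w measure \<Rightarrow> ('w \<Rightarrow> 'x) \<Rightarrow> ('w \<Rightarrow> 'y) \<Rightarrow> ('y \<Rightarrow> 'y \<Rightarrow> real) \<Rightarrow> bool" where
  "learns MY F alg M X Y loss \<longleftrightarrow> (\<exists>m. learns_with MY F alg M X Y loss m)"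

definition sample_complexity ::
    "'y measure \<Rightarrow> ('x::topological_space \<Rightarrow> 'y) set \<Rightarrow> (('x \<times> 'y) list \<Rightarrow> ('x \<Rightarrow> 'y))
     \<Rightarrow> 'w measure \<Rightarrow> ('w \<Rightarrow> 'x) \<Rightarrow> ('w \<Rightarrow> 'y) \<Rightarrow> ('y \<Rightarrow> 'y \<Rightarrow> real) \<Rightarrow> real \<Rightarrow> real \<Rightarrow> nat" where
  "sample_complexity MY F alg M X Y loss \<epsilon> \<delta> =
     (LEAST k. \<exists>m. learns_with MY F alg M X Y loss m \<and> m \<epsilon> \<delta> = k)"

definition FG_equivalent ::
    "'y measure \<Rightarrow> ('x::topological_space \<Rightarrow> 'y) set \<Rightarrow> ('g \<Rightarrow> 'x \<Rightarrow> 'x)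
     \<Rightarrow> 'w measure \<Rightarrow> ('w \<Rightarrow> 'x) \<Rightarrow> ('w \<Rightarrow> 'y) \<Rightarrow> ('y \<Rightarrow> 'y \<Rightarrow> real)
     \<Rightarrow> 'v measure \<Rightarrow> ('v \<Rightarrow> 'x) \<Rightarrow> ('v \<Rightarrow> 'y) \<Rightarrow> ('y \<Rightarrow> 'y \<Rightarrow> real) \<Rightarrow> bool" where
  "FG_equivalent MY F act M X Y loss M' X' Y' loss' \<longleftrightarrow>
     (\<forall>alg. learning_algorithm F alg \<and> invariant_algorithm act alg \<longrightarrow>
        (learns MY F alg M X Y loss \<longleftrightarrow> learns MY F alg M' X' Y' loss') \<and>
        sample_complexity MY F alg M X Y loss = sample_complexity MY F alg M' X' Y' loss')"

end

theory Submission
  imports Defs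
begin

text \<open>Every hypothesis in F is invariant and \<pi> x lies in the orbit of x, so f \<circ> \<pi> = f;
  hence each risk, and the optimal risk over F, is the same for the task and its projection.
  A sample of the projected task is the coordinatewise image under \<pi> of a sample of the
  original one, and an invariant algorithm returns the same hypothesis on both, since it may
  move each sample point by its own group element. So the event that the learned
  hypothesis is \<epsilon>-optimal is invariant under this map, and it has the same probability under
  both sample laws.\<close>

lemma orbit_selector_choice:
  assumes "\<forall>x. p x \<in> orbit act x"
  obtains g where "\<And>x. p x = act (g x) x"
proof -
  have "\<forall>x. \<exists>g. p x = act g x" using assms unfolding orbit_def by blast
  then show ?thesis using that by metis
qed

lemma invariant_fun_orbit:
  assumes "invariant_fun act f" and "y \<in> orbit act x"
  shows "f y = f x"
  using assms unfolding invariant_fun_def orbit_def by auto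

lemma invariant_algorithm_map_orbit_selector:
  assumes "invariant_algorithm act alg" and "\<forall>x. p x \<in> orbit act x"
  shows "alg (map (\<lambda>z. (p (fst z), snd z)) zs) = alg zs"
proof -
  obtain g where g: "\<And>x. p x = act (g x) x"
    using orbit_selector_choice[OF assms(2)] by blast
  have "map (\<lambda>z. (p (fst z), snd z)) zs
      = map2 (\<lambda>h z. (act h (fst z), snd z)) (map (g \<circ> fst) zs) zs"
    by (induction zs) (simp_all add: g)
  then show ?thesis
    using assms(1) unfolding invariant_algorithm_def by simp
qed

lemma measure_distr_of_invariant_set:
  assumes T: "T \<in> measurable N N'" and sets_eq: "sets N' = sets N"
    and A: "A \<subseteq> space N" and inv: "\<And>s. s \<in> space N \<Longrightarrow> T s \<in> A \<longleftrightarrow> s \<in> A"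
  shows "measure (distr N N' T) A = measure N A"
proof (cases "A \<in> sets N")
  case True
  have "T -` A \<inter> space N = A" using A inv by auto
  then show ?thesis
    using True by (simp add: measure_distr[OF T] sets_eq)
next
  case False
  then show ?thesis by (simp add: measure_notin_sets sets_eq)
qed

lemma data_law_comp:
  assumes [measurable]: "X \<in> borel_measurable M" "Y \<in> measurable M MY" "p \<in> borel_measurable borel"
  shows "data_law MY M (\<lambda>w. p (X w)) Y
       = distr (data_law MY M X Y) (borel \<Otimes>\<^sub>M MY) (\<lambda>z. (p (fst z), snd z))"
  unfolding data_law_def by (subst distr_distr) (auto simp: comp_def)

lemma risk_comp_invariant:
  assumes [measurable]: "X \<in> borel_measurable M" "Y \<in> measurable M MY" "p \<in> borel_measurable borel"
    and [measurable]: "f \<in> measurable borel MY"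
    and loss: "(\<lambda>q. loss (fst q) (snd q)) \<in> borel_measurable (MY \<Otimes>\<^sub>M MY)"
    and f_p: "\<And>x. f (p x) = f x"
  shows "risk MY M (\<lambda>w. p (X w)) Y loss f = risk MY M X Y loss f"
proof -
  have "(\<lambda>z. (f (fst z), snd z)) \<in> measurable (borel \<Otimes>\<^sub>M MY) (MY \<Otimes>\<^sub>M MY)"
    by measurable
  from measurable_compose[OF this loss]
  have [measurable]: "(\<lambda>z. loss (f (fst z)) (snd z)) \<in> borel_measurable (borel \<Otimes>\<^sub>M MY)"
    by simp
  show ?thesis
    unfolding risk_def data_law_def by (subst (1 2) nn_integral_distr) (auto simp: f_p)
qed

lemma sample_law_comp:
  assumes "prob_space M"
    and [measurable]: "X \<in> borel_measurable M" "Y \<in> measurable M MY" "p \<in> borel_measurable borel"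
  shows "sample_law MY M (\<lambda>w. p (X w)) Y n
       = distr (sample_law MY M X Y n) (sample_law MY M (\<lambda>w. p (X w)) Y n)
           (compose {..<n} (\<lambda>z. (p (fst z), snd z)))"
proof -
  define D where "D = data_law MY M X Y"
  define Dp where "Dp = data_law MY M (\<lambda>w. p (X w)) Y"
  have prob: "prob_space D" "prob_space Dp"
    unfolding D_def Dp_def data_law_def
    by (simp_all add: prob_space.prob_space_distr[OF assms(1)])
  have sets_D: "sets D = sets (borel \<Otimes>\<^sub>M MY)" "sets Dp = sets (borel \<Otimes>\<^sub>M MY)"
    unfolding D_def Dp_def data_law_def by simp_all
  have h: "(\<lambda>z. (p (fst z), snd z)) \<in> measurable D Dp"
    unfolding measurable_cong_sets[OF sets_D] by measurable
  have "distr D Dp (\<lambda>z. (p (fst z), snd z)) = Dp"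
    unfolding Dp_def data_law_comp[OF assms(2-4)] D_def[symmetric]
    by (rule distr_cong) (simp_all add: sets_D D_def)
  then show ?thesis
    unfolding sample_law_def D_def[symmetric] Dp_def[symmetric]
    by (subst distr_PiM_finite_prob_space') (simp_all add: prob h)
qed

lemma sets_sample_law:
  "sets (sample_law MY M X Y n) = sets (PiM {..<n} (\<lambda>_. borel \<Otimes>\<^sub>M MY))"
  unfolding sample_law_def data_law_def by (intro sets_PiM_cong) simp_all

lemma measurable_compose_sample_law:
  assumes [measurable]: "h \<in> measurable (borel \<Otimes>\<^sub>M MY) (borel \<Otimes>\<^sub>M MY)"
  shows "compose {..<n} h \<in> measurable (sample_law MY M X Y n) (sample_law MY M' X' Y' n)"
  unfolding measurable_cong_sets[OF sets_sample_law sets_sample_law] compose_def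
  by measurable

definition success_event ::
    "'y measure \<Rightarrow> ('x::topological_space \<Rightarrow> 'y) set \<Rightarrow> (('x \<times> 'y) list \<Rightarrow> ('x \<Rightarrow> 'y))
     \<Rightarrow> 'w measure \<Rightarrow> ('w \<Rightarrow> 'x) \<Rightarrow> ('w \<Rightarrow> 'y) \<Rightarrow> ('y \<Rightarrow> 'y \<Rightarrow> real) \<Rightarrow> nat \<Rightarrow> real
     \<Rightarrow> (nat \<Rightarrow> 'x \<times> 'y) set" where
  "success_event MY F alg M X Y loss n \<epsilon> =
     {s \<in> space (sample_law MY M X Y n).
        risk MY M X Y loss (alg (map s [0..<n])) \<le> (\<Sqinter>f\<in>F. risk MY M X Y loss f) + ennreal \<epsilon>}"

lemma FG_equivalent_if_success_probabilities_eq: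
  assumes "\<And>alg n \<epsilon>. learning_algorithm F alg \<Longrightarrow> invariant_algorithm act alg \<Longrightarrow>
      measure (sample_law MY M X Y n) (success_event MY F alg M X Y loss n \<epsilon>)
    = measure (sample_law MY M' X' Y' n) (success_event MY F alg M' X' Y' loss' n \<epsilon>)"
  shows "FG_equivalent MY F act M X Y loss M' X' Y' loss'"
proof -
  have "learns_with MY F alg M X Y loss = learns_with MY F alg M' X' Y' loss'"
    if "learning_algorithm F alg" "invariant_algorithm act alg" for alg
    using assms[OF that] unfolding learns_with_def success_event_def by (intro ext) simp
  then show ?thesis
    unfolding FG_equivalent_def learns_def sample_complexity_def by simp
qed

lemma FG_equivalent_orbit_selector:
  fixes X :: "'w \<Rightarrow> 'x::topological_space" and Y :: "'w \<Rightarrow> 'y"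
  assumes "prob_space M"
    and [measurable]: "X \<in> borel_measurable M" "Y \<in> measurable M MY" "p \<in> borel_measurable borel"
    and loss: "(\<lambda>q. loss (fst q) (snd q)) \<in> borel_measurable (MY \<Otimes>\<^sub>M MY)"
    and selector: "\<forall>x. p x \<in> orbit act x"
    and F: "F \<subseteq> measurable borel MY" "\<forall>f\<in>F. invariant_fun act f"
  shows "FG_equivalent MY F act M X Y loss M (\<lambda>w. p (X w)) Y loss"
proof (rule FG_equivalent_if_success_probabilities_eq)
  fix alg n \<epsilon>
  assume alg: "learning_algorithm F alg" "invariant_algorithm act alg"
  define h :: "'x \<times> 'y \<Rightarrow> 'x \<times> 'y" where "h = (\<lambda>z. (p (fst z), snd z))"
  let ?S = "sample_law MY M X Y n" and ?Sp = "sample_law MY M (\<lambda>w. p (X w)) Y n"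
  let ?A = "success_event MY F alg M X Y loss n \<epsilon>"
  have risk_eq: "risk MY M (\<lambda>w. p (X w)) Y loss f = risk MY M X Y loss f" if "f \<in> F" for f
    using that F selector
    by (intro risk_comp_invariant loss) (auto intro: invariant_fun_orbit)
  have space_eq: "space ?Sp = space ?S"
    by (intro sets_eq_imp_space_eq) (simp only: sets_sample_law)
  have event_eq: "success_event MY F alg M (\<lambda>w. p (X w)) Y loss n \<epsilon> = ?A"
    using alg(1) unfolding success_event_def space_eq learning_algorithm_def
    by (simp add: risk_eq cong: INF_cong)
  have H: "compose {..<n} h \<in> measurable ?S ?Sp"
    unfolding h_def by (intro measurable_compose_sample_law) measurable
  have A_invariant: "compose {..<n} h s \<in> ?A \<longleftrightarrow> s \<in> ?A" if "s \<in> space ?S" for s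
  proof -
    have "map (compose {..<n} h s) [0..<n] = map h (map s [0..<n])"
      by (simp add: compose_def)
    then have "alg (map (compose {..<n} h s) [0..<n]) = alg (map h (map s [0..<n]))"
      by (simp only:)
    also have "\<dots> = alg (map s [0..<n])"
      unfolding h_def by (rule invariant_algorithm_map_orbit_selector[OF alg(2) selector])
    finally have alg_eq: "alg (map (compose {..<n} h s) [0..<n]) = alg (map s [0..<n])" .
    have "compose {..<n} h s \<in> space ?S"
      using measurable_space[OF H that] space_eq by simp
    then show ?thesis
      using that alg_eq unfolding success_event_def by simp
  qed
  have "measure ?S ?A = measure (distr ?S ?Sp (compose {..<n} h)) ?A"
    using H A_invariant
    by (intro measure_distr_of_invariant_set[symmetric])
      (auto simp: sets_sample_law success_event_def)
  also have "distr ?S ?Sp (compose {..<n} h) = ?Sp"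
    unfolding h_def by (rule sample_law_comp[OF assms(1-4), symmetric])
  finally show "measure ?S ?A = measure ?Sp (success_event MY F alg M (\<lambda>w. p (X w)) Y loss n \<epsilon>)"
    unfolding event_eq .
qed

theorem theorem6p6:
  fixes mul :: "'g::{t2_space,second_countable_topology} \<Rightarrow> 'g \<Rightarrow> 'g"
    and e :: 'g and ginv :: "'g \<Rightarrow> 'g"
    and act :: "'g \<Rightarrow> 'x::polish_space \<Rightarrow> 'x"
    and MY :: "'y measure"
    and Xpi :: "'x set" and proj :: "'x \<Rightarrow> 'x"
    and F :: "('x \<Rightarrow> 'y) set"
    and M :: "'w measure" and X :: "'w \<Rightarrow> 'x" and Y :: "'w \<Rightarrow> 'y"
    and loss :: "'y \<Rightarrow> 'y \<Rightarrow> real"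
  assumes "compact_topological_group mul e ginv"
    and "standard_borel_space MY" and "space MY = UNIV"
    and "measurable_action mul e act"
    and "measurable_cross_section act Xpi proj"
    and "hypothesis_class MY F"
    and "\<forall>f\<in>F. invariant_fun act f"
    and "is_task MY F M X Y loss"
    and "\<exists>\<nu>. prob_space \<nu> \<and> sets \<nu> = sets (borel :: 'g measure) \<and>
           distr M borel X =
           distr (\<nu> \<Otimes>\<^sub>M distr M borel (\<lambda>w. proj (X w))) borel (\<lambda>p. act (fst p) (snd p))"
  shows "FG_equivalent MY F act M X Y loss M (\<lambda>w. proj (X w)) Y loss"
proof -
  note task = assms(8)[unfolded is_task_def]
  note cross_section = assms(5)[unfolded measurable_cross_section_def]
  have "proj \<in> borel_measurable borel"
    using cross_section measurable_restrict_space2_iff by blast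
  then show ?thesis
    using task cross_section assms(6,7) unfolding hypothesis_class_def
    by (intro FG_equivalent_orbit_selector) auto
qed

end
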